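(* Let $Y$ be a continuous random variable supported on $[0,\infty)$ whose density $f$ satisfies $f(t)\le Ce^{-\lambda t}$ for all $t\ge0$, for some $C,\lambda>0$, and such that the support of $Y$ can be partitioned into $N$ intervals on each of which $f$ is differentiable and monotone. Let $\alpha$ satisfy $0<\alpha\le\lambda/2$. Then there is a constant $K_\alpha$ (depending on $\alpha,C,\lambda,N$) such that for every complex $s$ with $\Re s = -\alpha$, \[ |\mathbb{E}[e^{-sY}]| \le \frac{K_\alpha}{\sqrt{|s|}}. \] *)

theory Defs
  imports "HOL-Probability.Probability"
begin

definition piecewise_diff_monotone :: "nat \<Rightarrow> (real \<Rightarrow> real) \<Rightarrow> real set \<Rightarrow> bool" where
  "piecewise_diff_monotone N f S \<longleftrightarrow>
     (\<exists>I :: nat \<Rightarrow> real set.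
        (\<forall>k<N. is_interval (I k) \<and> I k \<noteq> {} \<and> f differentiable_on I k
                \<and> (mono_on (I k) f \<or> antimono_on (I k) f))
      \<and> (\<forall>j<N. \<forall>k<N. j \<noteq> k \<longrightarrow> I j \<inter> I k = {})
      \<and> (\<Union>k<N. I k) = S)"

end

theory Submission
  imports Defs
begin

text \<open>
  Write \<open>s = -\<alpha> + i\<omega>\<close> and \<open>w(t) = f(t) exp(\<alpha>t)\<close>. Since \<open>\<alpha> \<le> \<lambda>/2\<close>, \<open>w(t) \<le> C exp(-\<alpha>t)\<close>,
  so \<open>|E exp(-sY)| = |\<integral> f(t) exp(-st) dt| \<le> \<integral> w \<le> C/\<alpha>\<close>. For \<open>\<omega> \<noteq> 0\<close>, translating the integral by
  half a period \<open>h = \<pi>/|\<omega>|\<close> multiplies the kernel by \<open>-exp(\<alpha>h)\<close>, whence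
  \<open>(1 + exp(-\<alpha>h)) |\<integral> f(t) exp(-st) dt| \<le> \<integral> |f(t) - f(t+h)| exp(\<alpha>t) dt\<close>.
  On a monotone piece \<open>J\<close> the difference \<open>f(t) - f(t+h)\<close> has constant sign, so there the last
  integral telescopes to \<open>\<integral>\<^sub>S w(t) dt - exp(-\<alpha>h) \<integral>\<^sub>S w(t+h) dt\<close> with \<open>S = {t \<in> J. t + h \<in> J}\<close>.
  This is \<open>O(h)\<close>: \<open>w \<le> C\<close>, \<open>S\<close> and \<open>S + h\<close> differ by two sets of length at most \<open>h\<close>, and
  \<open>1 - exp(-\<alpha>h) \<le> \<alpha>h\<close>. The remaining points
  (those in \<open>[-h, 0)\<close> or within \<open>h\<close> of the end of their piece) cost another \<open>O(h)\<close> per piece.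
  Hence \<open>|E exp(-sY)| = O(min(1, 1/|\<omega>|)) = O(1/|s|)\<close>, and \<open>1/|s| \<le> 1/\<surd>(\<alpha>|s|)\<close> as \<open>|s| \<ge> \<alpha>\<close>.
\<close>

lemma distributed_integral_scaleR:
  fixes g :: "'b \<Rightarrow> 'c::{banach, second_countable_topology}"
  assumes dist: "distributed M N X (\<lambda>x. ennreal (f x))" and f_nonneg: "\<And>x. 0 \<le> f x"
    and g[measurable]: "g \<in> borel_measurable N"
  shows "(\<integral>x. f x *\<^sub>R g x \<partial>N) = (\<integral>x. g (X x) \<partial>M)"
proof -
  have [measurable]: "X \<in> measurable M N"
    using dist by (rule distributed_measurable)
  have "(\<lambda>x. ennreal (f x)) \<in> borel_measurable N"
    using dist by (rule distributed_borel_measurable)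
  then have [measurable]: "f \<in> borel_measurable N"
    using f_nonneg by simp
  have "(\<integral>x. f x *\<^sub>R g x \<partial>N) = integral\<^sup>L (density N (\<lambda>x. ennreal (f x))) g"
    by (rule integral_density[symmetric]) (auto simp: f_nonneg)
  also have "\<dots> = integral\<^sup>L (distr M N X) g"
    using distributed_distr_eq_density[OF dist] by simp
  also have "\<dots> = (\<integral>x. g (X x) \<partial>M)"
    by (rule integral_distr) auto
  finally show ?thesis .
qed

lemma lborel_bounded_diameter:
  fixes A :: "real set"
  assumes A: "A \<in> sets borel" and h: "0 \<le> h"
    and diam: "\<And>x y. x \<in> A \<Longrightarrow> y \<in> A \<Longrightarrow> \<bar>x - y\<bar> \<le> h"
  shows "integrable lborel (indicator A :: real \<Rightarrow> real)" and "measure lborel A \<le> 2 * h"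
proof -
  obtain x0 where sub: "A \<subseteq> {x0 - h .. x0 + h}"
  proof (cases "A = {}")
    case False
    then obtain x0 where "x0 \<in> A" by blast
    then show ?thesis
      using diam by (intro that[of x0]) (force simp: abs_le_iff)
  qed simp
  have fm: "{x0 - h .. x0 + h} \<in> fmeasurable lborel"
    using h by (simp add: fmeasurable_def emeasure_lborel_Icc)
  have "emeasure lborel A \<le> emeasure lborel {x0 - h .. x0 + h}"
    using sub by (rule emeasure_mono) simp
  also have "\<dots> < \<infinity>"
    using fm by (simp add: fmeasurable_def)
  finally show "integrable lborel (indicator A :: real \<Rightarrow> real)"
    using A by (simp add: integrable_indicator_iff)
  have "measure lborel A \<le> measure lborel {x0 - h .. x0 + h}"
    by (rule measure_mono_fmeasurable[OF sub _ fm]) (use A in simp)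
  then show "measure lborel A \<le> 2 * h"
    using h by simp
qed

lemma is_interval_right_exits_close:
  fixes J :: "real set"
  assumes "is_interval J" "0 \<le> h" "x \<in> J" "y \<in> J" "x + h \<notin> J" "y + h \<notin> J"
  shows "\<bar>x - y\<bar> \<le> h"
proof (rule ccontr)
  assume "\<not> ?thesis"
  then have "x \<le> x + h \<and> x + h \<le> y \<or> y \<le> y + h \<and> y + h \<le> x"
    using assms(2) by auto
  then show False
    using assms mem_is_interval_1_I[of J x y "x + h"] mem_is_interval_1_I[of J y x "y + h"] by auto
qed

lemma is_interval_left_exits_close:
  fixes J :: "real set"
  assumes J: "is_interval J" and "0 \<le> h" "x \<in> J" "y \<in> J" "x - h \<notin> J" "y - h \<notin> J"
  shows "\<bar>x - y\<bar> \<le> h"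
proof -
  have mem: "t \<in> uminus ` J \<longleftrightarrow> - t \<in> J" for t
    by (metis image_eqI imageE minus_minus)
  show ?thesis
    using is_interval_right_exits_close[of "uminus ` J" h "- x" "- y"] assms by (simp add: mem)
qed

lemma lborel_integral_exp_minus_nonneg:
  fixes a :: real
  assumes "0 < a"
  shows "integrable lborel (\<lambda>t. indicator {0..} t * exp (- a * t))"
    and "(\<integral>t. indicator {0..} t * exp (- a * t) \<partial>lborel) = 1 / a"
proof -
  have hi: "((\<lambda>t. exp (- a * t)) has_integral 1 / a) {0..}"
    using has_integral_exp_minus_to_infinity[OF assms, of 0] by simp
  then have si: "set_integrable lebesgue {0..} (\<lambda>t. exp (- a * t))"
    by (intro nonnegative_absolutely_integrable_1) (auto simp: has_integral_integrable)
  then show "integrable lborel (\<lambda>t. indicator {0..} t * exp (- a * t))"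
    by (simp add: set_integrable_def mult.commute integrable_completion)
  have "(LINT t:{0..}|lebesgue. exp (- a * t)) = 1 / a"
    using set_lebesgue_integral_eq_integral(2)[OF si] hi by (simp add: integral_unique)
  then show "(\<integral>t. indicator {0..} t * exp (- a * t) \<partial>lborel) = 1 / a"
    by (simp add: set_lebesgue_integral_def mult.commute integral_completion)
qed

lemma integral_interval_shift_diff_le:
  fixes w :: "real \<Rightarrow> real" and J :: "real set"
  assumes w[measurable]: "w \<in> borel_measurable borel" and w_int: "integrable lborel w"
    and w_nonneg: "\<And>t. 0 \<le> w t" and w_le: "\<And>t. w t \<le> C"
    and J: "is_interval J" and h: "0 \<le> h"
  defines "S \<equiv> {t. t \<in> J \<and> t + h \<in> J}"
  shows "\<bar>(\<integral>t. w t * indicator S t \<partial>lborel) - (\<integral>t. w (t + h) * indicator S t \<partial>lborel)\<bar> \<le> 4 * C * h"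
proof -
  have [measurable]: "J \<in> sets borel"
    using J by (rule real_interval_borel_measurable)
  have [measurable]: "S \<in> sets borel"
    unfolding S_def by measurable
  define E1 where "E1 = {x. x \<in> J \<and> x - h \<notin> J}"
  define E2 where "E2 = {x. x \<in> J \<and> x + h \<notin> J}"
  have [measurable]: "E1 \<in> sets borel" "E2 \<in> sets borel"
    unfolding E1_def E2_def by measurable
  txt \<open>\<open>S\<close> and \<open>S + h\<close> differ only within the sets \<open>E1\<close>, \<open>E2\<close> of points near the two ends of \<open>J\<close>.\<close>
  have E1: "integrable lborel (indicator E1 :: real \<Rightarrow> real)" "measure lborel E1 \<le> 2 * h"
    by (rule lborel_bounded_diameter; auto simp: E1_def h intro: is_interval_left_exits_close[OF J h])+
  have E2: "integrable lborel (indicator E2 :: real \<Rightarrow> real)" "measure lborel E2 \<le> 2 * h"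
    by (rule lborel_bounded_diameter; auto simp: E2_def h intro: is_interval_right_exits_close[OF J h])+
  have int1: "integrable lborel (\<lambda>t. w t * indicator S t)"
    by (rule integrable_real_mult_indicator[OF _ w_int]) simp
  have int2: "integrable lborel (\<lambda>x. w x * indicator S (x - h))"
    by (rule Bochner_Integration.integrable_bound[OF w_int]) (auto simp: w_nonneg split: split_indicator)
  have "(\<integral>t. w (t + h) * indicator S t \<partial>lborel) = (\<integral>x. w x * indicator S (x - h) \<partial>lborel)"
    using lborel_integral_real_affine[of 1 "\<lambda>t. w (t + h) * indicator S t" "-h"] by simp
  then have "\<bar>(\<integral>t. w t * indicator S t \<partial>lborel) - (\<integral>t. w (t + h) * indicator S t \<partial>lborel)\<bar>
      = \<bar>\<integral>x. w x * indicator S x - w x * indicator S (x - h) \<partial>lborel\<bar>"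
    using int1 int2 by simp
  also have "\<dots> \<le> (\<integral>x. C * (indicator E1 x + indicator E2 x) \<partial>lborel)"
  proof (rule integral_abs_bound_integral)
    show "integrable lborel (\<lambda>x. w x * indicator S x - w x * indicator S (x - h))"
      using int1 int2 by simp
    show "integrable lborel (\<lambda>x. C * (indicator E1 x + indicator E2 x) :: real)"
      using E1 E2 by simp
    show "\<bar>w x * indicator S x - w x * indicator S (x - h)\<bar> \<le> C * (indicator E1 x + indicator E2 x)" for x
      using w_nonneg[of x] w_le[of x] by (auto simp: S_def E1_def E2_def split: split_indicator)
  qed
  also have "\<dots> = C * (measure lborel E1 + measure lborel E2)"
    using E1 E2 by simp
  also have "\<dots> \<le> C * (2 * h + 2 * h)"
    using E1 E2 w_nonneg[of 0] w_le[of 0] by (intro mult_left_mono add_mono) auto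
  finally show ?thesis
    by simp
qed

lemma monotone_on_diff_sign:
  fixes f :: "real \<Rightarrow> real"
  assumes "mono_on J f \<or> antimono_on J f"
  obtains \<sigma> :: real where "\<bar>\<sigma>\<bar> = 1"
    and "\<And>t u. t \<in> J \<Longrightarrow> u \<in> J \<Longrightarrow> t \<le> u \<Longrightarrow> \<bar>f t - f u\<bar> = \<sigma> * (f t - f u)"
proof (cases "mono_on J f")
  case True
  then show ?thesis
    using that[of "-1"] monotone_onD[OF True] by fastforce
next
  case False
  then have "antimono_on J f"
    using assms by blast
  then show ?thesis
    using that[of 1] monotone_onD[of J "(\<le>)" "(\<ge>)" f] by fastforce
qed

lemma signed_damped_difference_le:
  fixes a b \<sigma> \<alpha> h :: real
  assumes "\<bar>\<sigma>\<bar> = 1" "0 \<le> \<alpha>" "0 \<le> h" "\<bar>a - b\<bar> \<le> D" "0 \<le> b" "b \<le> W"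
  shows "\<sigma> * a - \<sigma> * exp (- \<alpha> * h) * b \<le> D + \<alpha> * h * W"
proof -
  have damping: "0 \<le> 1 - exp (- \<alpha> * h)" "1 - exp (- \<alpha> * h) \<le> \<alpha> * h"
    using assms(2,3) exp_ge_add_one_self[of "- \<alpha> * h"] by simp_all
  have "\<sigma> * a - \<sigma> * exp (- \<alpha> * h) * b = \<sigma> * (a - b) + \<sigma> * ((1 - exp (- \<alpha> * h)) * b)"
    by (simp add: algebra_simps)
  also have "\<dots> \<le> \<bar>a - b\<bar> + (1 - exp (- \<alpha> * h)) * b"
    using assms(1,5) damping abs_ge_self[of "\<sigma> * (a - b)"] abs_ge_self[of "\<sigma> * ((1 - exp (- \<alpha> * h)) * b)"]
    by (simp add: abs_mult)
  also have "\<dots> \<le> D + \<alpha> * h * W"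
    using assms(2-6) damping by (intro add_mono mult_mono) auto
  finally show ?thesis .
qed

lemma lborel_integral_shift_mult_indicator_le:
  fixes w :: "real \<Rightarrow> real"
  assumes w_int: "integrable lborel w" and w_nonneg: "\<And>t. 0 \<le> w t" and S: "S \<in> sets borel"
  shows "(\<integral>t. w (t + h) * indicator S t \<partial>lborel) \<le> integral\<^sup>L lborel w"
proof -
  have "(\<integral>t. w (t + h) * indicator S t \<partial>lborel) = (\<integral>t. w t * indicator S (t - h) \<partial>lborel)"
    using lborel_integral_real_affine[of 1 "\<lambda>t. w (t + h) * indicator S t" "-h"] by simp
  also have "\<dots> \<le> integral\<^sup>L lborel w"
    by (rule integral_mono'[OF w_int]) (auto simp: w_nonneg split: split_indicator)
  finally show ?thesis .
qed

lemma monotone_on_shift_difference_integral_le: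
  fixes f :: "real \<Rightarrow> real" and J :: "real set"
  assumes f[measurable]: "f \<in> borel_measurable borel" and f_nonneg: "\<And>t. 0 \<le> f t"
    and \<alpha>: "0 \<le> \<alpha>" and h: "0 \<le> h"
    and w_le: "\<And>t. f t * exp (\<alpha> * t) \<le> C"
    and w_int: "integrable lborel (\<lambda>t. f t * exp (\<alpha> * t))"
    and w_integral: "(\<integral>t. f t * exp (\<alpha> * t) \<partial>lborel) \<le> W"
    and J: "is_interval J" and mono: "mono_on J f \<or> antimono_on J f"
  defines "S \<equiv> {t. t \<in> J \<and> t + h \<in> J}"
  shows "integrable lborel (\<lambda>t. indicator S t * \<bar>f t - f (t + h)\<bar> * exp (\<alpha> * t))"
    and "(\<integral>t. indicator S t * \<bar>f t - f (t + h)\<bar> * exp (\<alpha> * t) \<partial>lborel) \<le> 4 * C * h + \<alpha> * h * W"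
proof -
  define w where "w t = f t * exp (\<alpha> * t)" for t
  have [measurable]: "J \<in> sets borel"
    using J by (rule real_interval_borel_measurable)
  have [measurable]: "S \<in> sets borel" "w \<in> borel_measurable borel"
    unfolding S_def w_def by measurable
  have w_nonneg: "0 \<le> w t" for t
    unfolding w_def using f_nonneg[of t] by simp
  have w_int': "integrable lborel w"
    using w_int by (simp add: w_def[abs_def])
  have int1: "integrable lborel (\<lambda>t. w t * indicator S t)"
    by (rule integrable_real_mult_indicator[OF _ w_int']) simp
  have "integrable lborel (\<lambda>t. w (t + h))"
    using lborel_integrable_real_affine_iff[of 1 w h] w_int' by (simp add: add.commute)
  then have int2: "integrable lborel (\<lambda>t. w (t + h) * indicator S t)"
    by (rule integrable_real_mult_indicator[rotated]) simp
  obtain \<sigma> where \<sigma>: "\<bar>\<sigma>\<bar> = 1" and sign: "\<And>t u. t \<in> J \<Longrightarrow> u \<in> J \<Longrightarrow> t \<le> u \<Longrightarrow> \<bar>f t - f u\<bar> = \<sigma> * (f t - f u)"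
    using monotone_on_diff_sign[OF mono] by blast
  have telescope: "indicator S t * \<bar>f t - f (t + h)\<bar> * exp (\<alpha> * t)
      = \<sigma> * (w t * indicator S t) - \<sigma> * exp (- \<alpha> * h) * (w (t + h) * indicator S t)" for t
  proof (cases "t \<in> S")
    case True
    have "exp (- \<alpha> * h) * exp (\<alpha> * (t + h)) = exp (\<alpha> * t)"
      by (simp add: exp_add[symmetric] algebra_simps)
    then have "\<sigma> * w t - \<sigma> * exp (- \<alpha> * h) * w (t + h) = \<sigma> * (f t - f (t + h)) * exp (\<alpha> * t)"
      unfolding w_def by (simp add: algebra_simps)
    moreover have "\<bar>f t - f (t + h)\<bar> = \<sigma> * (f t - f (t + h))"
      using True sign[of t "t + h"] h by (simp add: S_def)
    ultimately show ?thesis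
      using True by simp
  qed simp
  show "integrable lborel (\<lambda>t. indicator S t * \<bar>f t - f (t + h)\<bar> * exp (\<alpha> * t))"
    unfolding telescope using int1 int2 by simp
  have "(\<integral>t. indicator S t * \<bar>f t - f (t + h)\<bar> * exp (\<alpha> * t) \<partial>lborel)
      = \<sigma> * (\<integral>t. w t * indicator S t \<partial>lborel) - \<sigma> * exp (- \<alpha> * h) * (\<integral>t. w (t + h) * indicator S t \<partial>lborel)"
    unfolding telescope using int1 int2 by simp
  also have "\<dots> \<le> 4 * C * h + \<alpha> * h * W"
  proof (rule signed_damped_difference_le[OF \<sigma> \<alpha> h])
    show "\<bar>(\<integral>t. w t * indicator S t \<partial>lborel) - (\<integral>t. w (t + h) * indicator S t \<partial>lborel)\<bar> \<le> 4 * C * h"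
      unfolding S_def
      by (rule integral_interval_shift_diff_le[OF _ w_int' w_nonneg _ J h]) (simp_all add: w_def w_le)
    show "0 \<le> (\<integral>t. w (t + h) * indicator S t \<partial>lborel)"
      by (intro Bochner_Integration.integral_nonneg) (simp add: w_nonneg)
    show "(\<integral>t. w (t + h) * indicator S t \<partial>lborel) \<le> W"
      using lborel_integral_shift_mult_indicator_le[OF w_int' w_nonneg, of S h] w_integral
      by (simp add: w_def[abs_def])
  qed
  finally show "(\<integral>t. indicator S t * \<bar>f t - f (t + h)\<bar> * exp (\<alpha> * t) \<partial>lborel) \<le> 4 * C * h + \<alpha> * h * W" .
qed

lemma abs_diff_mult_exp_le_shift:
  fixes a b \<alpha> h t :: real
  assumes "0 \<le> a" "0 \<le> b" "0 \<le> \<alpha>" "0 \<le> h"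
  shows "\<bar>a - b\<bar> * exp (\<alpha> * t) \<le> a * exp (\<alpha> * t) + b * exp (\<alpha> * (t + h))"
proof -
  have "\<bar>a - b\<bar> * exp (\<alpha> * t) \<le> (a + b) * exp (\<alpha> * t)"
    using assms by (intro mult_right_mono) auto
  also have "\<dots> \<le> a * exp (\<alpha> * t) + b * exp (\<alpha> * (t + h))"
    using assms by (simp add: distrib_right mult_left_mono)
  finally show ?thesis .
qed

lemma integrable_abs_shift_difference_mult_exp:
  fixes f :: "real \<Rightarrow> real"
  assumes f[measurable]: "f \<in> borel_measurable borel" and f_nonneg: "\<And>t. 0 \<le> f t"
    and \<alpha>: "0 \<le> \<alpha>" and h: "0 \<le> h"
    and w_int: "integrable lborel (\<lambda>t. f t * exp (\<alpha> * t))"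
  shows "integrable lborel (\<lambda>t. \<bar>f t - f (t + h)\<bar> * exp (\<alpha> * t))"
proof -
  have "integrable lborel (\<lambda>t. f t * exp (\<alpha> * t) + f (t + h) * exp (\<alpha> * (t + h)))"
    using w_int lborel_integrable_real_affine[OF w_int, of 1 h] by (simp add: add.commute)
  then show ?thesis
  proof (rule Bochner_Integration.integrable_bound)
    show "AE t in lborel. norm (\<bar>f t - f (t + h)\<bar> * exp (\<alpha> * t))
        \<le> norm (f t * exp (\<alpha> * t) + f (t + h) * exp (\<alpha> * (t + h)))"
      using abs_diff_mult_exp_le_shift[OF f_nonneg f_nonneg \<alpha> h] f_nonneg by (simp add: abs_of_nonneg)
  qed measurable
qed

lemma shift_difference_le_pieces:
  fixes f :: "real \<Rightarrow> real" and J :: "nat \<Rightarrow> real set"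
  assumes f_nonneg: "\<And>t. 0 \<le> f t" and f_neg: "\<And>t. t < 0 \<Longrightarrow> f t = 0"
    and \<alpha>: "0 \<le> \<alpha>" and h: "0 \<le> h" and w_le: "\<And>t. f t * exp (\<alpha> * t) \<le> C"
    and cover: "{0..} \<subseteq> (\<Union>k<N. J k)"
  shows "\<bar>f t - f (t + h)\<bar> * exp (\<alpha> * t)
    \<le> 2 * C * (indicator {-h..0} t + (\<Sum>k<N. indicator {t. t \<in> J k \<and> t + h \<notin> J k} t))
      + (\<Sum>k<N. indicator {t. t \<in> J k \<and> t + h \<in> J k} t * \<bar>f t - f (t + h)\<bar> * exp (\<alpha> * t))"
    (is "?D \<le> 2 * C * (?I + ?E) + ?P")
proof -
  have D_le: "?D \<le> 2 * C"
    using abs_diff_mult_exp_le_shift[OF f_nonneg f_nonneg \<alpha> h, of t "t + h" t] w_le[of t] w_le[of "t + h"]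
    by linarith
  have "0 \<le> ?E" "0 \<le> ?P" "0 \<le> C"
    using order_trans[OF mult_nonneg_nonneg[OF f_nonneg exp_ge_zero] w_le]
    by (auto intro!: sum_nonneg)
  then have nonneg: "0 \<le> 2 * C * (?I + ?E)" "0 \<le> ?P"
    by simp_all
  consider "t < - h" | "1 \<le> ?I + ?E" | k where "k < N" "t \<in> J k" "t + h \<in> J k"
  proof -
    consider "t < - h" | "- h \<le> t" "t < 0" | k where "k < N" "t \<in> J k"
      using subsetD[OF cover, of t] by (force simp: not_less)
    then show ?thesis
    proof cases
      case 2
      then show ?thesis
        using that(2) \<open>0 \<le> ?E\<close> by simp
    next
      case (3 k)
      show ?thesis
      proof (cases "t + h \<in> J k")
        case False
        then have "1 \<le> ?E"
          using 3 member_le_sum[of k "{..<N}" "\<lambda>k. indicator {t. t \<in> J k \<and> t + h \<notin> J k} t :: real"]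
          by auto
        then show ?thesis
          using that(2) by (simp add: add_increasing)
      qed (use 3 that(3) in blast)
    qed (use that(1) in blast)
  qed
  then show ?thesis
  proof cases
    case 1
    then show ?thesis
      using nonneg h by (simp add: f_neg)
  next
    case 2
    then have "2 * C \<le> 2 * C * (?I + ?E)"
      using \<open>0 \<le> C\<close> by (simp add: mult_le_cancel_left1)
    then show ?thesis
      using D_le nonneg by linarith
  next
    case (3 k)
    then have "?D \<le> ?P"
      using member_le_sum[of k "{..<N}" "\<lambda>k. indicator {t. t \<in> J k \<and> t + h \<in> J k} t * ?D"]
      by (auto simp: mult.assoc)
    then show ?thesis
      using nonneg by linarith
  qed
qed

lemma piecewise_monotone_shift_difference_integral_le:
  fixes f :: "real \<Rightarrow> real" and J :: "nat \<Rightarrow> real set"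
  assumes f[measurable]: "f \<in> borel_measurable borel"
    and f_nonneg: "\<And>t. 0 \<le> f t" and f_neg: "\<And>t. t < 0 \<Longrightarrow> f t = 0"
    and \<alpha>: "0 \<le> \<alpha>" and h: "0 \<le> h"
    and w_le: "\<And>t. f t * exp (\<alpha> * t) \<le> C"
    and w_int: "integrable lborel (\<lambda>t. f t * exp (\<alpha> * t))"
    and w_integral: "(\<integral>t. f t * exp (\<alpha> * t) \<partial>lborel) \<le> W"
    and J: "\<And>k. k < N \<Longrightarrow> is_interval (J k)"
    and mono: "\<And>k. k < N \<Longrightarrow> mono_on (J k) f \<or> antimono_on (J k) f"
    and cover: "{0..} \<subseteq> (\<Union>k<N. J k)"
  shows "integrable lborel (\<lambda>t. \<bar>f t - f (t + h)\<bar> * exp (\<alpha> * t))"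
    and "(\<integral>t. \<bar>f t - f (t + h)\<bar> * exp (\<alpha> * t) \<partial>lborel) \<le> h * (2 * C + N * (8 * C + \<alpha> * W))"
proof -
  define E where "E k = {t. t \<in> J k \<and> t + h \<notin> J k}" for k
  define P where "P k t = indicator {t. t \<in> J k \<and> t + h \<in> J k} t * \<bar>f t - f (t + h)\<bar> * exp (\<alpha> * t)" for k t
  have [measurable]: "J k \<in> sets borel" if "k < N" for k
    using J[OF that] by (rule real_interval_borel_measurable)
  have [measurable]: "E k \<in> sets borel" if "k < N" for k
    unfolding E_def using that by measurable
  have E: "integrable lborel (indicator (E k) :: real \<Rightarrow> real)" "measure lborel (E k) \<le> 2 * h"
    if k: "k < N" for k
    by (rule lborel_bounded_diameter; use k h in \<open>auto simp: E_def intro: is_interval_right_exits_close[OF J[OF k] h]\<close>)+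
  have P: "integrable lborel (P k)" "integral\<^sup>L lborel (P k) \<le> 4 * C * h + \<alpha> * h * W"
    if k: "k < N" for k
    using monotone_on_shift_difference_integral_le[OF f f_nonneg \<alpha> h w_le w_int w_integral J[OF k] mono[OF k]]
    by (simp_all add: P_def[abs_def])
  have I: "integrable lborel (indicator {-h..0} :: real \<Rightarrow> real)"
    using h by (simp add: integrable_indicator_iff emeasure_lborel_Icc)
  define R where "R t = 2 * C * (indicator {-h..0} t + (\<Sum>k<N. indicator (E k) t)) + (\<Sum>k<N. P k t)" for t
  have E_sum: "integrable lborel (\<lambda>t. \<Sum>k<N. indicator (E k) t :: real)"
    "(\<integral>t. (\<Sum>k<N. indicator (E k) t :: real) \<partial>lborel) = (\<Sum>k<N. measure lborel (E k))"
    using E by (auto simp: Bochner_Integration.integral_sum)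
  have P_sum: "integrable lborel (\<lambda>t. \<Sum>k<N. P k t)"
    "(\<integral>t. (\<Sum>k<N. P k t) \<partial>lborel) = (\<Sum>k<N. integral\<^sup>L lborel (P k))"
    using P by (auto simp: Bochner_Integration.integral_sum)
  have R_int: "integrable lborel R"
    unfolding R_def using I E_sum P_sum by simp
  have D_le_R: "\<bar>f t - f (t + h)\<bar> * exp (\<alpha> * t) \<le> R t" for t
    using shift_difference_le_pieces[OF f_nonneg f_neg \<alpha> h w_le cover, of t]
    by (simp add: R_def P_def E_def)
  show D_int: "integrable lborel (\<lambda>t. \<bar>f t - f (t + h)\<bar> * exp (\<alpha> * t))"
    by (rule integrable_abs_shift_difference_mult_exp[OF f f_nonneg \<alpha> h w_int])
  have "(\<integral>t. \<bar>f t - f (t + h)\<bar> * exp (\<alpha> * t) \<partial>lborel) \<le> integral\<^sup>L lborel R"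
    by (rule integral_mono[OF D_int R_int D_le_R])
  also have "\<dots> = 2 * C * (h + (\<Sum>k<N. measure lborel (E k))) + (\<Sum>k<N. integral\<^sup>L lborel (P k))"
    unfolding R_def using I E_sum P_sum h by simp
  also have "\<dots> \<le> 2 * C * (h + (\<Sum>k<N. 2 * h)) + (\<Sum>k<N. 4 * C * h + \<alpha> * h * W)"
    using E P order_trans[OF mult_nonneg_nonneg[OF f_nonneg exp_ge_zero] w_le]
    by (intro add_mono mult_left_mono sum_mono) auto
  also have "\<dots> = h * (2 * C + N * (8 * C + \<alpha> * W))"
    by (simp add: algebra_simps)
  finally show "(\<integral>t. \<bar>f t - f (t + h)\<bar> * exp (\<alpha> * t) \<partial>lborel) \<le> h * (2 * C + N * (8 * C + \<alpha> * W))" .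
qed

lemma norm_laplace_le_half_period_shift:
  fixes f :: "real \<Rightarrow> real" and s :: complex
  assumes f[measurable]: "f \<in> borel_measurable borel"
    and w_int: "integrable lborel (\<lambda>t. \<bar>f t\<bar> * exp (- Re s * t))"
    and Im: "Im s \<noteq> 0"
  defines "h \<equiv> pi / \<bar>Im s\<bar>"
  shows "cmod (\<integral>t. f t *\<^sub>R exp (- s * t) \<partial>lborel)
    \<le> (\<integral>t. \<bar>f t - f (t + h)\<bar> * exp (- Re s * t) \<partial>lborel)"
proof -
  define g where "g t = f t *\<^sub>R exp (- s * t)" for t
  define g' where "g' t = f (t + h) *\<^sub>R exp (- s * t)" for t
  have [measurable]: "g \<in> borel_measurable borel"
    unfolding g_def by measurable
  have g_int: "integrable lborel g"
    by (rule Bochner_Integration.integrable_bound[OF w_int]) (auto simp: g_def norm_exp_eq_Re)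
  have half_period: "exp (- s * h) = - exp (- Re s * h)"
  proof -
    have "Im s * h = pi \<or> Im s * h = - pi"
      using Im by (auto simp: h_def abs_if)
    then have "cis (Im (- s * h)) = -1"
      by (auto simp: cis.code complex_eq_iff)
    then show ?thesis
      by (subst exp_eq_polar) simp
  qed
  have g_shift: "g (t + h) = exp (- s * h) * g' t" for t
    by (simp add: g_def g'_def distrib_left algebra_simps flip: exp_add)
  have "integrable lborel (\<lambda>t. g (t + h))"
    using lborel_integrable_real_affine[OF g_int, of 1 h] by (simp add: add.commute)
  moreover have "g' = (\<lambda>t. exp (s * h) * g (t + h))"
    by (rule ext) (simp add: g_shift mult.assoc[symmetric] flip: exp_add)
  ultimately have g'_int: "integrable lborel g'"
    by simp
  define I where "I = integral\<^sup>L lborel g"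
  have "I = (\<integral>t. g (t + h) \<partial>lborel)"
    unfolding I_def using lborel_integral_real_affine[of 1 g h] by (simp add: add.commute)
  also have "\<dots> = exp (- s * h) * integral\<^sup>L lborel g'"
    by (simp add: g_shift)
  also have "\<dots> = - exp (- Re s * h) * integral\<^sup>L lborel g'"
    by (simp only: half_period)
  finally have "integral\<^sup>L lborel g' = - exp (Re s * h) * I"
    by (simp add: exp_minus field_simps)
  then have "(1 + exp (Re s * h)) * I = (\<integral>t. g t - g' t \<partial>lborel)"
    unfolding I_def using g_int g'_int by (simp add: algebra_simps)
  then have "(1 + exp (Re s * h)) * cmod I = cmod (\<integral>t. g t - g' t \<partial>lborel)"
    by (metis norm_mult norm_of_real abs_of_pos add_pos_pos exp_gt_zero zero_less_one of_real_1 of_real_add)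
  also have "\<dots> \<le> (\<integral>t. norm (g t - g' t) \<partial>lborel)"
    by (rule integral_norm_bound)
  also have "\<dots> = (\<integral>t. \<bar>f t - f (t + h)\<bar> * exp (- Re s * t) \<partial>lborel)"
    by (simp add: g_def g'_def norm_exp_eq_Re flip: scaleR_diff_left)
  finally have "(1 + exp (Re s * h)) * cmod I \<le> (\<integral>t. \<bar>f t - f (t + h)\<bar> * exp (- Re s * t) \<partial>lborel)" .
  moreover have "cmod I \<le> (1 + exp (Re s * h)) * cmod I"
    by (simp add: mult_le_cancel_right1)
  ultimately show ?thesis
    unfolding I_def g_def[abs_def] by linarith
qed

lemma le_inverse_sqrt_norm_of_min_bound:
  fixes s :: complex and x A B \<alpha> :: real
  assumes \<alpha>: "0 < \<alpha>" and s: "Re s = - \<alpha>" and A: "0 \<le> A" and B: "0 \<le> B"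
    and x_le: "x \<le> B" and x_le_Im: "Im s \<noteq> 0 \<Longrightarrow> x \<le> pi / \<bar>Im s\<bar> * A"
  shows "x \<le> ((2 * \<alpha> * B + 2 * pi * A) / sqrt \<alpha>) / sqrt (cmod s)"
proof -
  have s_ge: "\<alpha> \<le> cmod s"
    using abs_Re_le_cmod[of s] s \<alpha> by simp
  have s_le: "cmod s \<le> \<alpha> + \<bar>Im s\<bar>"
    using cmod_le[of s] s \<alpha> by simp
  have "x * cmod s \<le> 2 * \<alpha> * B + 2 * pi * A"
  proof (cases "\<bar>Im s\<bar> \<le> \<alpha>")
    case True
    then have "x * cmod s \<le> B * (2 * \<alpha>)"
      using x_le s_le s_ge \<alpha> B by (intro mult_mono) auto
    moreover have "0 \<le> 2 * pi * A"
      using A by simp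
    ultimately show ?thesis
      by (simp add: mult_ac)
  next
    case False
    then have "x * cmod s \<le> pi / \<bar>Im s\<bar> * A * (2 * \<bar>Im s\<bar>)"
      using x_le_Im s_le s_ge \<alpha> A by (intro mult_mono) auto
    moreover have "Im s \<noteq> 0" "0 \<le> 2 * \<alpha> * B"
      using False \<alpha> B by auto
    ultimately show ?thesis
      by (simp add: mult_ac)
  qed
  moreover have "0 < cmod s"
    using s_ge \<alpha> by linarith
  ultimately have "x \<le> (2 * \<alpha> * B + 2 * pi * A) / cmod s"
    by (simp add: pos_le_divide_eq)
  also have "\<dots> \<le> (2 * \<alpha> * B + 2 * pi * A) / (sqrt \<alpha> * sqrt (cmod s))"
  proof (rule divide_left_mono)
    have "sqrt \<alpha> * sqrt (cmod s) \<le> sqrt (cmod s) * sqrt (cmod s)"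
      using s_ge by (intro mult_right_mono) auto
    then show "sqrt \<alpha> * sqrt (cmod s) \<le> cmod s"
      by simp
  qed (use \<alpha> s_ge A B in \<open>auto intro!: mult_pos_pos\<close>)
  finally show ?thesis
    by (simp add: divide_divide_eq_left)
qed

lemma exp_weighted_le_exp_decay:
  fixes f :: "real \<Rightarrow> real"
  assumes f_neg: "\<And>t. t < 0 \<Longrightarrow> f t = 0" and f_le: "\<And>t. 0 \<le> t \<Longrightarrow> f t \<le> C * exp (- lam * t)"
    and C: "0 \<le> C" and \<alpha>: "\<alpha> \<le> lam / 2"
  shows "f t * exp (\<alpha> * t) \<le> C * (indicator {0..} t * exp (- \<alpha> * t))"
proof (cases "0 \<le> t")
  case True
  have "f t * exp (\<alpha> * t) \<le> C * exp (- lam * t) * exp (\<alpha> * t)"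
    using f_le[OF True] by (intro mult_right_mono) auto
  also have "\<dots> = C * exp ((\<alpha> - lam) * t)"
    by (simp add: mult_exp_exp algebra_simps)
  also have "\<dots> \<le> C * exp (- \<alpha> * t)"
  proof -
    have "(\<alpha> - lam) * t \<le> - \<alpha> * t"
      using True \<alpha> by (intro mult_right_mono) auto
    then show ?thesis
      using C by (intro mult_left_mono) auto
  qed
  finally show ?thesis
    using True by simp
qed (simp add: f_neg)

lemma norm_laplace_piecewise_monotone_le:
  fixes f :: "real \<Rightarrow> real" and J :: "nat \<Rightarrow> real set" and s :: complex
  assumes f[measurable]: "f \<in> borel_measurable borel"
    and f_nonneg: "\<And>t. 0 \<le> f t" and f_neg: "\<And>t. t < 0 \<Longrightarrow> f t = 0"
    and f_le: "\<And>t. 0 \<le> t \<Longrightarrow> f t \<le> C * exp (- lam * t)"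
    and C: "0 \<le> C" and \<alpha>: "0 < \<alpha>" "\<alpha> \<le> lam / 2"
    and J: "\<And>k. k < N \<Longrightarrow> is_interval (J k)"
    and mono: "\<And>k. k < N \<Longrightarrow> mono_on (J k) f \<or> antimono_on (J k) f"
    and cover: "{0..} \<subseteq> (\<Union>k<N. J k)"
    and s: "Re s = - \<alpha>"
  shows "cmod (\<integral>t. f t *\<^sub>R exp (- s * t) \<partial>lborel) \<le> C / \<alpha>"
    and "Im s \<noteq> 0 \<Longrightarrow> cmod (\<integral>t. f t *\<^sub>R exp (- s * t) \<partial>lborel) \<le> pi / \<bar>Im s\<bar> * ((2 + 9 * real N) * C)"
proof -
  define e where "e t = indicator {0..} t * exp (- \<alpha> * t)" for t :: real
  have w_le_e: "f t * exp (\<alpha> * t) \<le> C * e t" for t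
    unfolding e_def by (rule exp_weighted_le_exp_decay[OF f_neg f_le C \<alpha>(2)])
  have w_le: "f t * exp (\<alpha> * t) \<le> C" for t
  proof -
    have "e t \<le> 1"
      using \<alpha>(1) by (simp add: e_def indicator_def)
    then show ?thesis
      using w_le_e[of t] mult_left_le[OF _ C] by (meson order_trans)
  qed
  have e: "integrable lborel e" "integral\<^sup>L lborel e = 1 / \<alpha>"
    unfolding e_def using lborel_integral_exp_minus_nonneg[OF \<alpha>(1)] by simp_all
  have w_int: "integrable lborel (\<lambda>t. f t * exp (\<alpha> * t))"
    by (rule Bochner_Integration.integrable_bound[of _ "\<lambda>t. C * e t"])
       (use e f_nonneg in \<open>auto intro!: AE_I2 order_trans[OF w_le_e abs_ge_self]\<close>)
  have w_integral: "(\<integral>t. f t * exp (\<alpha> * t) \<partial>lborel) \<le> C / \<alpha>"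
    using integral_mono[OF w_int _ w_le_e] e by simp
  have "cmod (\<integral>t. f t *\<^sub>R exp (- s * t) \<partial>lborel) \<le> (\<integral>t. norm (f t *\<^sub>R exp (- s * t)) \<partial>lborel)"
    by (rule integral_norm_bound)
  also have "\<dots> = (\<integral>t. f t * exp (\<alpha> * t) \<partial>lborel)"
    using s f_nonneg by (simp add: norm_exp_eq_Re)
  finally show "cmod (\<integral>t. f t *\<^sub>R exp (- s * t) \<partial>lborel) \<le> C / \<alpha>"
    using w_integral by linarith
  show "cmod (\<integral>t. f t *\<^sub>R exp (- s * t) \<partial>lborel) \<le> pi / \<bar>Im s\<bar> * ((2 + 9 * real N) * C)"
    if Im: "Im s \<noteq> 0"
  proof -
    define h where "h = pi / \<bar>Im s\<bar>"
    have "cmod (\<integral>t. f t *\<^sub>R exp (- s * t) \<partial>lborel) \<le> (\<integral>t. \<bar>f t - f (t + h)\<bar> * exp (\<alpha> * t) \<partial>lborel)"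
      using norm_laplace_le_half_period_shift[OF f _ Im] w_int f_nonneg s by (simp add: h_def)
    also have "\<dots> \<le> h * (2 * C + N * (8 * C + \<alpha> * (C / \<alpha>)))"
      using Im by (intro piecewise_monotone_shift_difference_integral_le[OF f f_nonneg f_neg _ _ w_le w_int w_integral J mono cover])
        (simp_all add: h_def \<alpha>(1) less_imp_le)
    finally show ?thesis
      using \<alpha>(1) by (simp add: h_def algebra_simps)
  qed
qed

theorem lemma11:
  fixes C lam \<alpha> :: real and N :: nat
  assumes "C > 0" and "lam > 0" and "0 < \<alpha>" and "\<alpha> \<le> lam / 2"
  shows "\<exists>K::real. \<forall>(M::'a measure) (Y::'a \<Rightarrow> real) (f::real \<Rightarrow> real).
           prob_space M
         \<and> distributed M lborel Y (\<lambda>t. ennreal (f t))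
         \<and> (\<forall>t. 0 \<le> f t) \<and> (\<forall>t<0. f t = 0)
         \<and> (\<forall>t\<ge>0. f t \<le> C * exp (- lam * t))
         \<and> piecewise_diff_monotone N f {0..}
         \<longrightarrow> (\<forall>s::complex. Re s = - \<alpha> \<longrightarrow>
               cmod (LINT x|M. exp (- s * complex_of_real (Y x))) \<le> K / sqrt (cmod s))"
proof (intro exI allI impI, elim conjE)
  fix M :: "'a measure" and Y :: "'a \<Rightarrow> real" and f :: "real \<Rightarrow> real" and s :: complex
  assume dist: "distributed M lborel Y (\<lambda>t. ennreal (f t))"
    and "\<forall>t. 0 \<le> f t" "\<forall>t<0. f t = 0" "\<forall>t\<ge>0. f t \<le> C * exp (- lam * t)"
    and pieces: "piecewise_diff_monotone N f {0..}" and s: "Re s = - \<alpha>"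
  then have f_nonneg: "\<And>t. 0 \<le> f t" and f_neg: "\<And>t. t < 0 \<Longrightarrow> f t = 0"
    and f_le: "\<And>t. 0 \<le> t \<Longrightarrow> f t \<le> C * exp (- lam * t)"
    by simp_all
  obtain J :: "nat \<Rightarrow> real set" where
    "\<forall>k<N. is_interval (J k) \<and> J k \<noteq> {} \<and> f differentiable_on J k
      \<and> (mono_on (J k) f \<or> antimono_on (J k) f)"
    and cover: "(\<Union>k<N. J k) = {0..}"
    using pieces unfolding piecewise_diff_monotone_def by (elim exE conjE) blast
  then have J: "\<And>k. k < N \<Longrightarrow> is_interval (J k)"
    and mono: "\<And>k. k < N \<Longrightarrow> mono_on (J k) f \<or> antimono_on (J k) f"
    by simp_all
  have "(\<lambda>t. ennreal (f t)) \<in> borel_measurable lborel"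
    using dist by (rule distributed_borel_measurable)
  then have f: "f \<in> borel_measurable borel"
    using f_nonneg by simp
  have "(LINT x|M. exp (- s * Y x)) = (\<integral>t. f t *\<^sub>R exp (- s * t) \<partial>lborel)"
    using f_nonneg by (intro distributed_integral_scaleR[OF dist, symmetric]) auto
  moreover note norm_laplace_piecewise_monotone_le[OF f f_nonneg f_neg f_le _ assms(3,4) J mono _ s]
  ultimately show "cmod (LINT x|M. exp (- s * Y x))
      \<le> ((2 * \<alpha> * (C / \<alpha>) + 2 * pi * ((2 + 9 * real N) * C)) / sqrt \<alpha>) / sqrt (cmod s)"
    using assms(1,3) cover by (intro le_inverse_sqrt_norm_of_min_bound[OF assms(3) s]) simp_all
qed

end
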